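(* Let $n,m$ be positive integers and let $\mathbb P$ be one of the distributions $x_m,x^*_m,x^+_m$ on $S_n$. Then $\mathrm{sep}(\mathbb P)=\max\{1-n!\,\mathbb P(0),\,1-n!\,\mathbb P(k_{\max})\}$ and $\|\mathbb P-U\|_\infty=\max\{|1-n!\,\mathbb P(0)|,\,|1-n!\,\mathbb P(k_{\max})|\}$, where $k_{\max}=\lfloor n/2\rfloor$, $\lfloor (n-1)/2\rfloor$, $n-1$ for $x_m$, $x^*_m$, $x^+_m$ respectively.
   Context: For $\pi\in S_n$: $\mathrm{des}(\pi)=|\{i:\pi(i)>\pi(i+1)\}|$; $\mathrm{pk}(\pi)=|\{2\le i\le n-1:\pi(i-1)<\pi(i)>\pi(i+1)\}|$; $\mathrm{lpk}(\pi)$ is the number of peaks with the convention $\pi(0)=0$. Integers are written with $\bar i=-i$, ordered $0<_{\mathbb Z}\bar1<_{\mathbb Z}1<_{\mathbb Z}\bar2<2<\cdots$, $|\bar j|=j$; $a\prec_+b$ means $a<_{\mathbb Z}b$ or $a=b\in\{0,1,\ldots\}$; $a\prec_-b$ means $a<_{\mathbb Z}b$ or $a=b\in\{\bar1,\bar2,\ldots\}$. A $\pi$-partition is $f:[n]\to\mathbb Z$ with, for $1\le i<n$, $f(\pi(i))\prec_+f(\pi(i+1))$ if $\pi(i)<\pi(i+1)$, $f(\pi(i))\prec_-f(\pi(i+1))$ if $\pi(i)>\pi(i+1)$. $\Omega_\pi(m)$ counts $\pi$-partitions with $|f(i)|\le m$; $\Omega^*_\pi(m)$ those also never $0$; $\Omega^+_\pi(m)$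 those with values in $\{1,\ldots,m\}$. The distributions are $x_m(\pi)=\Omega_\pi(m)/(2m+1)^n$, $x^*_m(\pi)=\Omega^*_\pi(m)/(2m)^n$, $x^+_m(\pi)=\Omega^+_\pi(m)/m^n$ (the lazy, standard and strict $m$-shelf shuffling distributions). It is known that $x_m(\pi)$ depends only on $\mathrm{lpk}(\pi)$, $x^*_m(\pi)$ only on $\mathrm{pk}(\pi)$, $x^+_m(\pi)$ only on $\mathrm{des}(\pi)$; for $\mathbb P=x_m$ (resp. $x^*_m$, $x^+_m$), $\mathbb P(k)$ denotes the common value on permutations with $\mathrm{lpk}=k$ (resp. $\mathrm{pk}=k$, $\mathrm{des}=k$). $U$ is the uniform distribution on $S_n$; $\mathrm{sep}(\mathbb P)=\max_{\pi}(1-n!\mathbb P(\pi))$ and $\|\mathbb P-U\|_\infty=\max_\pi|1-n!\mathbb P(\pi)|$. *)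

theory Defs
  imports Complex_Main "HOL-Library.FuncSet" "HOL-Combinatorics.Permutations"
begin

text \<open>Permutations of [n] = {1..n} are functions nat => nat that permute {1..n}.\<close>

definition des :: "nat \<Rightarrow> (nat \<Rightarrow> nat) \<Rightarrow> nat" where
  "des n p = card {i \<in> {1..<n}. p i > p (Suc i)}"

definition pk :: "nat \<Rightarrow> (nat \<Rightarrow> nat) \<Rightarrow> nat" where
  "pk n p = card {i \<in> {2..n-1}. p (i-1) < p i \<and> p i > p (Suc i)}"

definition lpk :: "nat \<Rightarrow> (nat \<Rightarrow> nat) \<Rightarrow> nat" where
  "lpk n p = card {i \<in> {1..n-1}. (if i = 1 then 0 else p (i-1)) < p i \<and> p i > p (Suc i)}"

text \<open>The order 0 < -1 < 1 < -2 < 2 < ... on the integers, via a rank key.\<close>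
definition zkey :: "int \<Rightarrow> int" where
  "zkey a = (if a \<ge> 0 then 2 * a else 2 * (- a) - 1)"

definition zless :: "int \<Rightarrow> int \<Rightarrow> bool" where
  "zless a b \<longleftrightarrow> zkey a < zkey b"

definition prec_plus :: "int \<Rightarrow> int \<Rightarrow> bool" where
  "prec_plus a b \<longleftrightarrow> zless a b \<or> (a = b \<and> a \<ge> 0)"

definition prec_minus :: "int \<Rightarrow> int \<Rightarrow> bool" where
  "prec_minus a b \<longleftrightarrow> zless a b \<or> (a = b \<and> a < 0)"

definition is_ppart :: "nat \<Rightarrow> (nat \<Rightarrow> nat) \<Rightarrow> (nat \<Rightarrow> int) \<Rightarrow> bool" where
  "is_ppart n p f \<longleftrightarrow> (\<forall>i. 1 \<le> i \<and> i < n \<longrightarrow>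
     (p i < p (Suc i) \<longrightarrow> prec_plus (f (p i)) (f (p (Suc i)))) \<and>
     (p i > p (Suc i) \<longrightarrow> prec_minus (f (p i)) (f (p (Suc i)))))"

definition Omega :: "nat \<Rightarrow> nat \<Rightarrow> (nat \<Rightarrow> nat) \<Rightarrow> nat" where
  "Omega n m p = card {f \<in> {1..n} \<rightarrow>\<^sub>E {- int m..int m}. is_ppart n p f}"

definition Omega_star :: "nat \<Rightarrow> nat \<Rightarrow> (nat \<Rightarrow> nat) \<Rightarrow> nat" where
  "Omega_star n m p = card {f \<in> {1..n} \<rightarrow>\<^sub>E ({- int m..int m} - {0}). is_ppart n p f}"

definition Omega_plus :: "nat \<Rightarrow> nat \<Rightarrow> (nat \<Rightarrow> nat) \<Rightarrow> nat" where
  "Omega_plus n m p = card {f \<in> {1..n} \<rightarrow>\<^sub>E {1..int m}. is_ppart n p f}"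

definition x_lazy :: "nat \<Rightarrow> nat \<Rightarrow> (nat \<Rightarrow> nat) \<Rightarrow> real" where
  "x_lazy n m p = real (Omega n m p) / (2 * real m + 1) ^ n"

definition x_std :: "nat \<Rightarrow> nat \<Rightarrow> (nat \<Rightarrow> nat) \<Rightarrow> real" where
  "x_std n m p = real (Omega_star n m p) / (2 * real m) ^ n"

definition x_strict :: "nat \<Rightarrow> nat \<Rightarrow> (nat \<Rightarrow> nat) \<Rightarrow> real" where
  "x_strict n m p = real (Omega_plus n m p) / (real m) ^ n"

definition Pk :: "nat \<Rightarrow> ((nat \<Rightarrow> nat) \<Rightarrow> real) \<Rightarrow> (nat \<Rightarrow> (nat \<Rightarrow> nat) \<Rightarrow> nat) \<Rightarrow> nat \<Rightarrow> real" where
  "Pk n P st k = P (SOME p. p permutes {1..n} \<and> st n p = k)"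

definition sep :: "nat \<Rightarrow> ((nat \<Rightarrow> nat) \<Rightarrow> real) \<Rightarrow> real" where
  "sep n P = Max ((\<lambda>p. 1 - fact n * P p) ` {p. p permutes {1..n}})"

definition linf_dist :: "nat \<Rightarrow> ((nat \<Rightarrow> nat) \<Rightarrow> real) \<Rightarrow> real" where
  "linf_dist n P = Max ((\<lambda>p. \<bar>1 - fact n * P p\<bar>) ` {p. p permutes {1..n}})"

definition sep_linf_extremal :: "nat \<Rightarrow> ((nat \<Rightarrow> nat) \<Rightarrow> real) \<Rightarrow> (nat \<Rightarrow> (nat \<Rightarrow> nat) \<Rightarrow> nat) \<Rightarrow> nat \<Rightarrow> bool" where
  "sep_linf_extremal n P st kmax \<longleftrightarrow>
     sep n P = max (1 - fact n * Pk n P st 0) (1 - fact n * Pk n P st kmax) \<and>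
     linf_dist n P = max \<bar>1 - fact n * Pk n P st 0\<bar> \<bar>1 - fact n * Pk n P st kmax\<bar>"

end

theory Submission
  imports Defs
begin

text \<open>A \<pi>-partition is determined by its absolute values, a weakly increasing sequence, and
  a choice of signs. For fixed absolute values every flat step forces one sign, and the two flat
  steps around a peak force contradictory ones; so the number of sign choices is
  2^(number of strict rises + c), with c = 1 for the standard and c = 0 for the lazy shuffle,
  if every peak is next to a strict rise, and 0 otherwise. Permuting the increments so that the
  peaks of one descent word are carried into the peaks of a word with at least as many peaks
  shows that \<Omega> and \<Omega>* decrease with lpk and pk, while \<Omega>+ decreases as the descent set
  grows. Hence each distribution is largest at statistic 0 and smallest at k_max, and the
  maxima defining sep and the sup-distance are attained at these two extremes.\<close>

section \<open>Enriched sequences\<close>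

definition enriched_step :: "bool \<Rightarrow> int \<Rightarrow> int \<Rightarrow> bool" where
  "enriched_step d x y \<longleftrightarrow> (if d then prec_minus x y else prec_plus x y)"

lemma enriched_step_iff:
  "enriched_step d x y \<longleftrightarrow> \<bar>x\<bar> < \<bar>y\<bar> \<or> (\<bar>x\<bar> = \<bar>y\<bar> \<and> (if d then x < 0 else 0 \<le> y))"
  unfolding enriched_step_def prec_minus_def prec_plus_def zless_def zkey_def
  by (cases d) (auto split: if_splits)

text \<open>A \<pi>-partition f is encoded by g = f \<circ> \<pi> on the positions {a..b}; w i says whether
  the step from position i to i+1 is a descent of \<pi>.\<close>
definition wparts :: "nat \<Rightarrow> nat \<Rightarrow> (nat \<Rightarrow> bool) \<Rightarrow> int set \<Rightarrow> (nat \<Rightarrow> int) set" where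
  "wparts a b w V = {g \<in> {a..b} \<rightarrow>\<^sub>E V. \<forall>i\<in>{a..<b}. enriched_step (w i) (g i) (g (Suc i))}"

definition descent_word :: "(nat \<Rightarrow> nat) \<Rightarrow> nat \<Rightarrow> bool" where
  "descent_word p i \<longleftrightarrow> p (Suc i) < p i"

lemma finite_wparts: "finite V \<Longrightarrow> finite (wparts a b w V)"
  unfolding wparts_def by (rule finite_subset[of _ "{a..b} \<rightarrow>\<^sub>E V"]) (auto intro: finite_PiE)

lemma permutes_Suc_neq: "p permutes S \<Longrightarrow> p i \<noteq> p (Suc i)"
  using permutes_inj by (metis injD n_not_Suc_n)

lemma is_ppart_iff_enriched_steps:
  assumes "p permutes {1..n}"
  shows "is_ppart n p f \<longleftrightarrow>
    (\<forall>i\<in>{1..<n}. enriched_step (descent_word p i) (f (p i)) (f (p (Suc i))))"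
  using permutes_Suc_neq[OF assms] permutes_Suc_neq[OF assms, symmetric]
  unfolding is_ppart_def enriched_step_def descent_word_def
  by (auto simp: not_less_iff_gr_or_eq)

lemma bij_betw_restrict_compose_permutes:
  assumes "p permutes S"
  shows "bij_betw (\<lambda>f. restrict (f \<circ> p) S) (S \<rightarrow>\<^sub>E V) (S \<rightarrow>\<^sub>E V)"
proof (rule bij_betw_byWitness[where f' = "\<lambda>g. restrict (g \<circ> inv p) S"])
  have pS: "p x \<in> S \<longleftrightarrow> x \<in> S" "inv p x \<in> S \<longleftrightarrow> x \<in> S" for x
    using permutes_in_image[OF assms] permutes_in_image[OF permutes_inv[OF assms]] by auto
  note inv = permutes_inverses[OF assms]
  show "\<forall>f\<in>S \<rightarrow>\<^sub>E V. restrict (restrict (f \<circ> p) S \<circ> inv p) S = f"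
  proof
    fix f assume "f \<in> S \<rightarrow>\<^sub>E V"
    then show "restrict (restrict (f \<circ> p) S \<circ> inv p) S = f"
      by (intro extensionalityI[of _ S]) (simp_all add: pS inv PiE_def)
  qed
  show "\<forall>g\<in>S \<rightarrow>\<^sub>E V. restrict (restrict (g \<circ> inv p) S \<circ> p) S = g"
  proof
    fix g assume "g \<in> S \<rightarrow>\<^sub>E V"
    then show "restrict (restrict (g \<circ> inv p) S \<circ> p) S = g"
      by (intro extensionalityI[of _ S]) (simp_all add: pS inv PiE_def)
  qed
  show "(\<lambda>f. restrict (f \<circ> p) S) ` (S \<rightarrow>\<^sub>E V) \<subseteq> S \<rightarrow>\<^sub>E V"
    "(\<lambda>g. restrict (g \<circ> inv p) S) ` (S \<rightarrow>\<^sub>E V) \<subseteq> S \<rightarrow>\<^sub>E V"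
    using pS by (fastforce simp: restrict_PiE_iff dest: PiE_mem)+
qed

lemma card_ppart_eq_card_wparts:
  assumes "p permutes {1..n}"
  shows "card {f \<in> {1..n} \<rightarrow>\<^sub>E V. is_ppart n p f} = card (wparts 1 n (descent_word p) V)"
proof -
  have "bij_betw (\<lambda>f. restrict (f \<circ> p) {1..n}) {f \<in> {1..n} \<rightarrow>\<^sub>E V. is_ppart n p f}
      (wparts 1 n (descent_word p) V)"
    unfolding wparts_def
    by (rule bij_betw_Collect[OF bij_betw_restrict_compose_permutes[OF assms]])
      (use permutes_in_image[OF assms] in \<open>auto simp: is_ppart_iff_enriched_steps[OF assms]\<close>)
  then show ?thesis by (rule bij_betw_same_card)
qed

section \<open>Absolute-value profiles\<close>

lemma wparts_abs_mono:
  assumes "g \<in> wparts a b w V" "a \<le> i" "i \<le> j" "j \<le> b"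
  shows "\<bar>g i\<bar> \<le> \<bar>g j\<bar>"
  using assms(3,4)
proof (induction j rule: dec_induct)
  case (step j)
  then have "enriched_step (w j) (g j) (g (Suc j))"
    using assms(1,2) by (auto simp: wparts_def)
  then show ?case using step by (auto simp: enriched_step_iff)
qed simp

text \<open>A profile records the weakly increasing absolute values of some g by their start value
  and their increments.\<close>
definition profiles :: "nat \<Rightarrow> nat \<Rightarrow> nat \<Rightarrow> nat set \<Rightarrow> (nat \<times> (nat \<Rightarrow> nat)) set" where
  "profiles a b m H = {(h0, d). h0 \<in> H \<and> d \<in> {a..<b} \<rightarrow>\<^sub>E UNIV \<and> h0 + sum d {a..<b} \<le> m}"

definition profile_val :: "nat \<Rightarrow> nat \<times> (nat \<Rightarrow> nat) \<Rightarrow> nat \<Rightarrow> nat" where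
  "profile_val a x i = fst x + sum (snd x) {a..<i}"

definition wparts_abs :: "nat \<Rightarrow> nat \<Rightarrow> (nat \<Rightarrow> bool) \<Rightarrow> nat \<Rightarrow> nat set \<Rightarrow> (nat \<Rightarrow> int) set" where
  "wparts_abs a b w m H = {g \<in> wparts a b w {- int m..int m}. nat \<bar>g a\<bar> \<in> H}"

definition abs_fiber :: "nat \<Rightarrow> nat \<Rightarrow> (nat \<Rightarrow> bool) \<Rightarrow> nat \<Rightarrow> (nat \<Rightarrow> nat) \<Rightarrow> (nat \<Rightarrow> int) set" where
  "abs_fiber a b w m h = {g \<in> wparts a b w {- int m..int m}. \<forall>i\<in>{a..b}. nat \<bar>g i\<bar> = h i}"

lemma profile_val_Suc: "a \<le> i \<Longrightarrow> profile_val a x (Suc i) = profile_val a x i + snd x i"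
  by (simp add: profile_val_def sum.atLeastLessThan_Suc)

lemma profile_val_le:
  assumes "x \<in> profiles a b m H" "i \<le> b"
  shows "profile_val a x i \<le> m"
proof -
  have "sum (snd x) {a..<i} \<le> sum (snd x) {a..<b}"
    using assms(2) by (intro sum_mono2) auto
  then show ?thesis using assms(1) by (auto simp: profiles_def profile_val_def)
qed

lemma finite_profiles: "finite (profiles a b m H)"
proof (rule finite_subset)
  show "profiles a b m H \<subseteq> {0..m} \<times> ({a..<b} \<rightarrow>\<^sub>E {0..m})"
  proof clarify
    fix h0 d assume x: "(h0, d) \<in> profiles a b m H"
    then have "d i \<le> m" if "i \<in> {a..<b}" for i
      using member_le_sum[of i "{a..<b}" d] that by (auto simp: profiles_def)
    then show "h0 \<in> {0..m} \<and> d \<in> {a..<b} \<rightarrow>\<^sub>E {0..m}"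
      using x by (auto simp: profiles_def PiE_def Pi_def)
  qed
qed (intro finite_cartesian_product finite_PiE; simp)

lemma profile_val_inj:
  assumes "a \<le> b" "x \<in> profiles a b m H" "y \<in> profiles a b m H"
    and "\<forall>i\<in>{a..b}. profile_val a x i = profile_val a y i"
  shows "x = y"
proof (cases x, cases y)
  fix h0 d h0' d' assume x: "x = (h0, d)" and y: "y = (h0', d')"
  have "h0 = h0'"
    using assms(1) assms(4)[rule_format, of a] x y by (auto simp: profile_val_def)
  moreover have "d i = d' i" for i
  proof (cases "i \<in> {a..<b}")
    case True
    then show ?thesis
      using assms(4) profile_val_Suc[of a i x] profile_val_Suc[of a i y] x y by force
  next
    case False
    then show ?thesis using assms(2,3) x y by (auto simp: profiles_def PiE_def extensional_def)
  qed
  ultimately show "x = y" using x y by auto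
qed

lemma profile_of_wparts:
  assumes "g \<in> wparts a b w V" "a \<le> b"
  defines "x \<equiv> (nat \<bar>g a\<bar>, restrict (\<lambda>j. nat \<bar>g (Suc j)\<bar> - nat \<bar>g j\<bar>) {a..<b})"
  shows "\<forall>i\<in>{a..b}. profile_val a x i = nat \<bar>g i\<bar>"
proof
  fix i assume "i \<in> {a..b}"
  then have "a \<le> i" "i \<le> b" by auto
  then show "profile_val a x i = nat \<bar>g i\<bar>"
  proof (induction i rule: dec_induct)
    case (step i)
    have "nat \<bar>g i\<bar> \<le> nat \<bar>g (Suc i)\<bar>" using wparts_abs_mono[OF assms(1)] step by (simp add: nat_mono)
    then show ?case using step profile_val_Suc[of a i x] by (simp add: x_def)
  qed (simp add: x_def profile_val_def)
qed

lemma card_wparts_abs: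
  assumes "a \<le> b"
  shows "card (wparts_abs a b w m H) =
    (\<Sum>x\<in>profiles a b m H. card (abs_fiber a b w m (profile_val a x)))"
proof -
  have "wparts_abs a b w m H = (\<Union>x\<in>profiles a b m H. abs_fiber a b w m (profile_val a x))"
  proof (intro equalityI subsetI)
    fix g assume g: "g \<in> wparts_abs a b w m H"
    then have gW: "g \<in> wparts a b w {- int m..int m}" by (simp add: wparts_abs_def)
    define x where "x = (nat \<bar>g a\<bar>, restrict (\<lambda>j. nat \<bar>g (Suc j)\<bar> - nat \<bar>g j\<bar>) {a..<b})"
    have val: "\<forall>i\<in>{a..b}. profile_val a x i = nat \<bar>g i\<bar>"
      unfolding x_def by (rule profile_of_wparts[OF gW assms])
    have "\<bar>g b\<bar> \<le> m" using gW assms by (auto simp: wparts_def PiE_def Pi_def)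
    then have "x \<in> profiles a b m H"
      using g val[rule_format, of b] assms by (auto simp: wparts_abs_def profiles_def x_def profile_val_def)
    then show "g \<in> (\<Union>x\<in>profiles a b m H. abs_fiber a b w m (profile_val a x))"
      using gW val by (auto simp: abs_fiber_def intro!: bexI[of _ x])
  next
    fix g assume "g \<in> (\<Union>x\<in>profiles a b m H. abs_fiber a b w m (profile_val a x))"
    then show "g \<in> wparts_abs a b w m H"
      using assms by (force simp: abs_fiber_def wparts_abs_def profiles_def profile_val_def)
  qed
  moreover have "finite (abs_fiber a b w m h)" for h
    by (rule finite_subset[OF _ finite_wparts[of "{- int m..int m}" a b w]]) (auto simp: abs_fiber_def)
  moreover have "abs_fiber a b w m (profile_val a x) \<inter> abs_fiber a b w m (profile_val a y) = {}"
    if "x \<in> profiles a b m H" "y \<in> profiles a b m H" "x \<noteq> y" for x y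
    using profile_val_inj[OF assms that(1,2)] that(3) by (auto simp: abs_fiber_def)
  ultimately show ?thesis by (simp add: card_UN_disjoint finite_profiles)
qed

section \<open>Sign choices with prescribed absolute values\<close>

definition rises :: "nat \<Rightarrow> nat \<Rightarrow> (nat \<Rightarrow> nat) \<Rightarrow> nat set" where
  "rises a b h = {i \<in> {a..<b}. h i < h (Suc i)}"

text \<open>A flat step i (one not in C) fixes one sign: at a descent g i must be negative,
  at an ascent g (i+1) must be nonnegative.\<close>
definition forced_neg :: "nat \<Rightarrow> nat \<Rightarrow> (nat \<Rightarrow> bool) \<Rightarrow> nat set \<Rightarrow> nat set" where
  "forced_neg a b w C = {i \<in> {a..<b} - C. w i}"

definition forced_nonneg :: "nat \<Rightarrow> nat \<Rightarrow> (nat \<Rightarrow> bool) \<Rightarrow> nat set \<Rightarrow> nat set" where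
  "forced_nonneg a b w C = Suc ` {i \<in> {a..<b} - C. \<not> w i}"

definition signed :: "nat \<Rightarrow> nat \<Rightarrow> (nat \<Rightarrow> nat) \<Rightarrow> nat set \<Rightarrow> nat \<Rightarrow> int" where
  "signed a b h N = (\<lambda>i\<in>{a..b}. if i \<in> N then - int (h i) else int (h i))"

lemma enriched_step_signed:
  assumes "i \<in> {a..<b}" "h i \<le> h (Suc i)" "N \<subseteq> {j. 0 < h j}"
  shows "enriched_step d (signed a b h N i) (signed a b h N (Suc i)) \<longleftrightarrow>
    h i < h (Suc i) \<or> (if d then i \<in> N else Suc i \<notin> N)"
  using assms by (auto simp: enriched_step_iff signed_def)

lemma sign_constraints_iff_forced:
  assumes "N \<subseteq> {a..b}"
  shows "(\<forall>i\<in>{a..<b}. i \<in> C \<or> (if w i then i \<in> N else Suc i \<notin> N)) \<longleftrightarrow>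
    forced_neg a b w C \<subseteq> N \<and> N \<inter> forced_nonneg a b w C = {}"
  using assms by (auto simp: forced_neg_def forced_nonneg_def)

lemma signed_in_wparts_iff:
  assumes mono: "\<forall>i\<in>{a..<b}. h i \<le> h (Suc i)" and bound: "\<forall>i\<in>{a..b}. h i \<le> m"
    and N: "N \<subseteq> {i \<in> {a..b}. 0 < h i}"
  shows "signed a b h N \<in> wparts a b w {- int m..int m} \<longleftrightarrow>
    forced_neg a b w (rises a b h) \<subseteq> N \<and> N \<inter> forced_nonneg a b w (rises a b h) = {}"
proof -
  have N0: "N \<subseteq> {j. 0 < h j}" using N by auto
  have "signed a b h N \<in> {a..b} \<rightarrow>\<^sub>E {- int m..int m}"
    using bound by (auto simp: signed_def)
  moreover have "enriched_step (w i) (signed a b h N i) (signed a b h N (Suc i)) \<longleftrightarrow>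
      i \<in> rises a b h \<or> (if w i then i \<in> N else Suc i \<notin> N)" if "i \<in> {a..<b}" for i
    using enriched_step_signed[OF that _ N0] mono that by (auto simp: rises_def)
  ultimately have "signed a b h N \<in> wparts a b w {- int m..int m} \<longleftrightarrow>
      (\<forall>i\<in>{a..<b}. i \<in> rises a b h \<or> (if w i then i \<in> N else Suc i \<notin> N))"
    by (auto simp: wparts_def)
  also have "\<dots> \<longleftrightarrow> forced_neg a b w (rises a b h) \<subseteq> N \<and> N \<inter> forced_nonneg a b w (rises a b h) = {}"
    by (rule sign_constraints_iff_forced) (use N in auto)
  finally show ?thesis .
qed

lemma signed_neg_set:
  assumes "g \<in> abs_fiber a b w m h"
  shows "signed a b h {i \<in> {a..b}. g i < 0} = g"
proof (rule extensionalityI[of _ "{a..b}"])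
  have "h i = nat \<bar>g i\<bar>" if "i \<in> {a..b}" for i
    using assms that by (simp add: abs_fiber_def)
  then show "signed a b h {i \<in> {a..b}. g i < 0} i = g i" if "i \<in> {a..b}" for i
    using that by (simp add: signed_def)
qed (use assms in \<open>auto simp: signed_def abs_fiber_def wparts_def PiE_def\<close>)

lemma card_abs_fiber:
  assumes mono: "\<forall>i\<in>{a..<b}. h i \<le> h (Suc i)" and bound: "\<forall>i\<in>{a..b}. h i \<le> m"
  shows "card (abs_fiber a b w m h) = card {N. forced_neg a b w (rises a b h) \<subseteq> N \<and>
    N \<subseteq> {i \<in> {a..b}. 0 < h i} - forced_nonneg a b w (rises a b h)}"
    (is "_ = card ?Adm")
proof (rule sym, rule bij_betw_same_card,
    rule bij_betw_byWitness[where f' = "\<lambda>g. {i \<in> {a..b}. g i < 0}"])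
  note signed_iff = signed_in_wparts_iff[OF mono bound]
  show "\<forall>N\<in>?Adm. {i \<in> {a..b}. signed a b h N i < 0} = N"
    by (auto simp: signed_def)
  show "\<forall>g\<in>abs_fiber a b w m h. signed a b h {i \<in> {a..b}. g i < 0} = g"
    using signed_neg_set by blast
  show "signed a b h ` ?Adm \<subseteq> abs_fiber a b w m h"
  proof clarify
    fix N assume "forced_neg a b w (rises a b h) \<subseteq> N"
      and "N \<subseteq> {i \<in> {a..b}. 0 < h i} - forced_nonneg a b w (rises a b h)"
    then have "signed a b h N \<in> wparts a b w {- int m..int m}"
      using signed_iff[of N] by blast
    then show "signed a b h N \<in> abs_fiber a b w m h" by (auto simp: abs_fiber_def signed_def)
  qed
  show "(\<lambda>g. {i \<in> {a..b}. g i < 0}) ` abs_fiber a b w m h \<subseteq> ?Adm"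
  proof (rule image_subsetI)
    fix g assume g: "g \<in> abs_fiber a b w m h"
    let ?N = "{i \<in> {a..b}. g i < 0}"
    have N: "?N \<subseteq> {i \<in> {a..b}. 0 < h i}"
      using g by (force simp: abs_fiber_def)
    moreover have "signed a b h ?N \<in> wparts a b w {- int m..int m}"
      using g signed_neg_set[OF g] by (simp add: abs_fiber_def)
    ultimately show "?N \<in> ?Adm" using signed_iff[OF N] by blast
  qed
qed

section \<open>Peaks and free signs\<close>

text \<open>i \<in> peaks a b w means that position i+1 is a peak: the ascent i is
  followed by the descent i+1.\<close>
definition peaks :: "nat \<Rightarrow> nat \<Rightarrow> (nat \<Rightarrow> bool) \<Rightarrow> nat set" where
  "peaks a b w = {i. a \<le> i \<and> Suc i < b \<and> \<not> w i \<and> w (Suc i)}"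

definition covers_peaks :: "nat \<Rightarrow> nat \<Rightarrow> (nat \<Rightarrow> bool) \<Rightarrow> nat set \<Rightarrow> bool" where
  "covers_peaks a b w C \<longleftrightarrow> (\<forall>i\<in>peaks a b w. i \<in> C \<or> Suc i \<in> C)"

lemma forced_disjoint_iff_covers_peaks:
  "forced_neg a b w C \<inter> forced_nonneg a b w C = {} \<longleftrightarrow> covers_peaks a b w C"
proof
  assume disjoint: "forced_neg a b w C \<inter> forced_nonneg a b w C = {}"
  show "covers_peaks a b w C" unfolding covers_peaks_def
  proof (rule ballI, rule ccontr)
    fix i assume "i \<in> peaks a b w" "\<not> (i \<in> C \<or> Suc i \<in> C)"
    then have "Suc i \<in> forced_neg a b w C" "Suc i \<in> forced_nonneg a b w C"
      by (auto simp: peaks_def forced_neg_def forced_nonneg_def)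
    then show False using disjoint by blast
  qed
next
  assume "covers_peaks a b w C"
  then show "forced_neg a b w C \<inter> forced_nonneg a b w C = {}"
    by (auto simp: covers_peaks_def peaks_def forced_neg_def forced_nonneg_def)
qed

text \<open>Two flat steps can only force the same position if they are the two steps of a peak.\<close>
lemma card_forced_positions:
  assumes "covers_peaks a b w C"
  shows "card (forced_neg a b w C \<union> forced_nonneg a b w C) = card ({a..<b} - C)"
proof -
  let ?pos = "\<lambda>i. if w i then i else Suc i"
  have image: "forced_neg a b w C \<union> forced_nonneg a b w C = ?pos ` ({a..<b} - C)"
    by (auto simp: forced_neg_def forced_nonneg_def)
  have "inj_on ?pos ({a..<b} - C)"
  proof (rule inj_onI)
    fix i j assume i: "i \<in> {a..<b} - C" and j: "j \<in> {a..<b} - C" and eq: "?pos i = ?pos j"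
    have no_collision: False
      if "k \<in> {a..<b} - C" "Suc k \<in> {a..<b} - C" "\<not> w k" "w (Suc k)" for k
      using assms that unfolding covers_peaks_def peaks_def by auto
    show "i = j"
    proof (cases "w i = w j")
      case False
      then show ?thesis using eq i j no_collision[of i] no_collision[of j] by (auto split: if_splits)
    qed (use eq in \<open>auto split: if_splits\<close>)
  qed
  then show ?thesis unfolding image by (rule card_image)
qed

lemma card_free_positions:
  assumes "a \<le> b" "C \<subseteq> {a..<b}" "covers_peaks a b w C"
  shows "card ({a..b} - forced_nonneg a b w C - forced_neg a b w C) = card C + 1"
proof -
  have sub: "forced_neg a b w C \<union> forced_nonneg a b w C \<subseteq> {a..b}"
    by (auto simp: forced_neg_def forced_nonneg_def)
  have "card ({a..<b} - C) = (b - a) - card C"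
    using assms(2) by (simp add: card_Diff_subset finite_subset)
  moreover have "card C \<le> b - a"
    using card_mono[OF _ assms(2)] by simp
  moreover have "{a..b} - forced_nonneg a b w C - forced_neg a b w C =
      {a..b} - (forced_neg a b w C \<union> forced_nonneg a b w C)"
    by blast
  ultimately show ?thesis
    using card_forced_positions[OF assms(3)] card_Diff_subset[OF finite_subset[OF sub] sub] assms(1)
    by simp
qed

lemma card_interval_sets:
  assumes "finite B"
  shows "card {N. A \<subseteq> N \<and> N \<subseteq> B} = (if A \<subseteq> B then 2 ^ card (B - A) else 0)"
proof (cases "A \<subseteq> B")
  case True
  have "bij_betw (\<lambda>M. M \<union> A) (Pow (B - A)) {N. A \<subseteq> N \<and> N \<subseteq> B}"
    by (rule bij_betw_byWitness[where f' = "\<lambda>N. N - A"]) (use True in auto)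
  then show ?thesis using True assms by (simp add: bij_betw_same_card[symmetric] card_Pow)
next
  case False
  then have "{N. A \<subseteq> N \<and> N \<subseteq> B} = {}" by blast
  then show ?thesis using False by (metis card.empty)
qed

lemma rises_profile_val: "rises a b (profile_val a x) = {i \<in> {a..<b}. 0 < snd x i}"
  by (auto simp: rises_def profile_val_Suc)

lemma card_abs_fiber_profile:
  assumes "x \<in> profiles a b m H"
  shows "card (abs_fiber a b w m (profile_val a x)) =
    card {N. forced_neg a b w (rises a b (profile_val a x)) \<subseteq> N \<and>
      N \<subseteq> {i \<in> {a..b}. 0 < profile_val a x i} - forced_nonneg a b w (rises a b (profile_val a x))}"
  by (rule card_abs_fiber) (use profile_val_le[OF assms] in \<open>auto simp: profile_val_Suc\<close>)

lemma card_abs_fiber_std: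
  assumes "x \<in> profiles a b m {1..m}" "a \<le> b"
  defines "C \<equiv> rises a b (profile_val a x)"
  shows "card (abs_fiber a b w m (profile_val a x)) =
    (if covers_peaks a b w C then 2 ^ (card C + 1) else 0)"
proof -
  have "{i \<in> {a..b}. 0 < profile_val a x i} = {a..b}"
    using assms(1) by (auto simp: profiles_def profile_val_def)
  moreover have "forced_neg a b w C \<subseteq> {a..b} - forced_nonneg a b w C \<longleftrightarrow> covers_peaks a b w C"
    using forced_disjoint_iff_covers_peaks[of a b w C] by (auto simp: forced_neg_def)
  moreover have "C \<subseteq> {a..<b}" by (auto simp: C_def rises_def)
  ultimately show ?thesis
    using card_abs_fiber_profile[OF assms(1), of w] card_free_positions[OF assms(2)]
    by (simp add: card_interval_sets C_def)
qed

lemma no_descent_before_first_rise: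
  assumes "\<not> w a" "covers_peaks a b w C" "k < b" "{a..k} \<inter> C = {}" "j \<in> {a..k}"
  shows "\<not> w j"
proof -
  have "a \<le> j" "j \<le> k" using assms(5) by auto
  then show ?thesis
  proof (induction j rule: dec_induct)
    case (step n)
    have "n \<in> {a..k}" "Suc n \<in> {a..k}" "Suc n < b" using assms(3) step by auto
    then have "n \<notin> C" "Suc n \<notin> C" "Suc n < b" using assms(4) by blast+
    moreover have "\<not> w n" using step by (simp add: Suc_leD)
    ultimately show ?case using assms(2) \<open>a \<le> n\<close> unfolding covers_peaks_def peaks_def by blast
  qed (rule assms(1))
qed

text \<open>In the lazy case the profile starts at 0; below the first rise all steps are flat
  ascents, so every zero position other than a has its sign forced and none is forced negative.\<close>
lemma zero_positions_forced:
  assumes x: "x \<in> profiles a b m {0}" and wa: "\<not> w a"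
    and cov: "covers_peaks a b w (rises a b (profile_val a x))"
    and i: "i \<in> {a..b}" "profile_val a x i = 0"
  shows "i \<notin> forced_neg a b w (rises a b (profile_val a x))"
    and "i = a \<or> i \<in> forced_nonneg a b w (rises a b (profile_val a x))"
proof -
  let ?C = "rises a b (profile_val a x)"
  have no_rise: "{a..<i} \<inter> ?C = {}"
    using x i by (auto simp: profiles_def profile_val_def rises_profile_val)
  show "i \<notin> forced_neg a b w ?C"
  proof
    assume "i \<in> forced_neg a b w ?C"
    then have "i < b" "i \<notin> ?C" "w i" by (auto simp: forced_neg_def)
    moreover from no_rise \<open>i \<notin> ?C\<close> have "{a..i} \<inter> ?C = {}"
      using i by (simp add: atLeastLessThanSuc_atLeastAtMost[symmetric] atLeastLessThanSuc)
    ultimately show False using no_descent_before_first_rise[OF wa cov, of i i] i by auto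
  qed
  show "i = a \<or> i \<in> forced_nonneg a b w ?C"
  proof (cases i)
    case (Suc k)
    show ?thesis
    proof (cases "k < a")
      case False
      then have "{a..k} \<inter> ?C = {}" "k < b"
        using no_rise i Suc by (simp_all add: atLeastLessThanSuc_atLeastAtMost)
      moreover from this(1) False have "k \<notin> ?C" by (auto simp: disjoint_iff)
      ultimately show ?thesis
        using Suc False no_descent_before_first_rise[OF wa cov, of k k] by (auto simp: forced_nonneg_def)
    qed (use i Suc in auto)
  qed (use i in auto)
qed

lemma card_abs_fiber_lazy:
  assumes x: "x \<in> profiles a b m {0}" and "a \<le> b" and wa: "\<not> w a"
  defines "C \<equiv> rises a b (profile_val a x)"
  shows "card (abs_fiber a b w m (profile_val a x)) =
    (if covers_peaks a b w C then 2 ^ card C else 0)"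
proof -
  let ?Pos = "{i \<in> {a..b}. 0 < profile_val a x i}"
  have ha: "profile_val a x a = 0" using x by (cases x) (simp add: profiles_def profile_val_def)
  have Fm: "forced_neg a b w C \<subseteq> ?Pos" if cov: "covers_peaks a b w C"
    using zero_positions_forced(1)[OF x wa cov[unfolded C_def]]
    by (force simp: C_def forced_neg_def)
  have free: "?Pos - forced_nonneg a b w C - forced_neg a b w C =
      ({a..b} - forced_nonneg a b w C - forced_neg a b w C) - {a}" if cov: "covers_peaks a b w C"
  proof (intro set_eqI iffI)
    fix i assume i: "i \<in> ({a..b} - forced_nonneg a b w C - forced_neg a b w C) - {a}"
    then have "profile_val a x i \<noteq> 0"
      using zero_positions_forced(2)[OF x wa cov[unfolded C_def], of i] by (auto simp: C_def)
    then show "i \<in> ?Pos - forced_nonneg a b w C - forced_neg a b w C" using i by auto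
  qed (use ha in auto)
  have a_free: "a \<in> {a..b} - forced_nonneg a b w C - forced_neg a b w C"
    using \<open>a \<le> b\<close> wa by (auto simp: forced_neg_def forced_nonneg_def)
  have "forced_neg a b w C \<subseteq> ?Pos - forced_nonneg a b w C \<longleftrightarrow> covers_peaks a b w C"
    using forced_disjoint_iff_covers_peaks[of a b w C] Fm by auto
  moreover have "C \<subseteq> {a..<b}" by (auto simp: C_def rises_def)
  ultimately show ?thesis
    using card_abs_fiber_profile[OF x, of w] card_free_positions[OF \<open>a \<le> b\<close>] free a_free
    by (simp add: card_interval_sets C_def[symmetric] card_Diff_singleton)
qed

definition peak_weight :: "nat \<Rightarrow> nat \<Rightarrow> (nat \<Rightarrow> bool) \<Rightarrow> nat \<Rightarrow> nat set \<Rightarrow> nat" where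
  "peak_weight a b w c C = (if covers_peaks a b w C then 2 ^ (card C + c) else 0)"

lemma card_wparts_abs_std:
  assumes "a \<le> b"
  shows "card (wparts_abs a b w m {1..m}) =
    (\<Sum>x\<in>profiles a b m {1..m}. peak_weight a b w 1 (rises a b (profile_val a x)))"
  unfolding card_wparts_abs[OF assms] peak_weight_def
  by (intro sum.cong refl card_abs_fiber_std assms)

lemma card_wparts_abs_lazy:
  assumes "a \<le> b" "\<not> w a"
  shows "card (wparts_abs a b w m {0}) =
    (\<Sum>x\<in>profiles a b m {0}. peak_weight a b w 0 (rises a b (profile_val a x)))"
  unfolding card_wparts_abs[OF assms(1)] peak_weight_def
  by (intro sum.cong refl) (simp add: card_abs_fiber_lazy assms)

section \<open>Comparing words by their number of peaks\<close>

lemma inj_on_extend_to_permutes: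
  assumes "finite L" "A \<subseteq> L" "inj_on f A" "f ` A \<subseteq> L"
  obtains \<tau> where "\<tau> permutes L" "\<forall>x\<in>A. \<tau> x = f x"
proof -
  have "card (L - A) = card (L - f ` A)"
    using assms finite_subset[OF assms(2,1)] by (simp add: card_Diff_subset card_image)
  then obtain g where g: "bij_betw g (L - A) (L - f ` A)"
    using finite_same_card_bij assms(1) by blast
  define \<tau> where "\<tau> x = (if x \<in> A then f x else if x \<in> L then g x else x)" for x
  have "bij_betw \<tau> A (f ` A)"
    using inj_on_imp_bij_betw[OF assms(3)] by (rule bij_betw_cong[THEN iffD1, rotated]) (simp add: \<tau>_def)
  moreover have "bij_betw \<tau> (L - A) (L - f ` A)"
    using g by (rule bij_betw_cong[THEN iffD1, rotated]) (simp add: \<tau>_def)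
  ultimately have "bij_betw \<tau> (A \<union> (L - A)) (f ` A \<union> (L - f ` A))"
    by (rule bij_betw_combine) blast
  moreover have "A \<union> (L - A) = L" "f ` A \<union> (L - f ` A) = L" using assms by auto
  ultimately have "\<tau> permutes L"
    by (intro bij_imp_permutes) (use assms(2) in \<open>auto simp: \<tau>_def\<close>)
  then show thesis using that[of \<tau>] by (simp add: \<tau>_def)
qed

lemma finite_peaks: "finite (peaks a b w)"
  by (rule finite_subset[of _ "{a..<b}"]) (auto simp: peaks_def)

lemma peaks_Suc_notin: "i \<in> peaks a b w \<Longrightarrow> Suc i \<notin> peaks a b w"
  by (simp add: peaks_def)

lemma card_peaks_le: "card (peaks a b w) \<le> (b - a) div 2"
proof -
  have "peaks a b w \<inter> Suc ` peaks a b w = {}" "peaks a b w \<union> Suc ` peaks a b w \<subseteq> {a..<b}"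
    by (auto simp: peaks_def)
  then have "card (peaks a b w) + card (peaks a b w) \<le> b - a"
    using card_mono[of "{a..<b}" "peaks a b w \<union> Suc ` peaks a b w"]
    by (simp add: card_Un_disjoint card_image finite_peaks)
  then show ?thesis by linarith
qed

text \<open>The pairs {i, i+1} of peak steps are pairwise disjoint, so an injection between the
  peak sets extends to a permutation of the steps carrying pairs to pairs.\<close>
lemma peak_pairing:
  assumes "card (peaks a b w) \<le> card (peaks a b w')"
  obtains \<tau> where "\<tau> permutes {a..<b}"
    "\<forall>i\<in>peaks a b w. \<tau> i \<in> peaks a b w' \<and> \<tau> (Suc i) = Suc (\<tau> i)"
proof -
  obtain \<rho> where \<rho>: "\<rho> ` peaks a b w \<subseteq> peaks a b w'" "inj_on \<rho> (peaks a b w)"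
    using card_le_inj[OF finite_peaks finite_peaks assms] by blast
  define A where "A = peaks a b w \<union> Suc ` peaks a b w"
  define f where "f i = (if i \<in> peaks a b w then \<rho> i else Suc (\<rho> (i - 1)))" for i
  have f: "f i = \<rho> i" "f (Suc i) = Suc (\<rho> i)" "\<rho> i \<in> peaks a b w'" if "i \<in> peaks a b w" for i
    using that peaks_Suc_notin[OF that] \<rho>(1) by (auto simp: f_def)
  have "inj_on f A"
  proof (rule inj_onI)
    fix x y assume "x \<in> A" "y \<in> A" "f x = f y"
    then consider (LL) "x \<in> peaks a b w" "y \<in> peaks a b w" "\<rho> x = \<rho> y"
      | (LS) y' where "x \<in> peaks a b w" "y' \<in> peaks a b w" "\<rho> x = Suc (\<rho> y')"
      | (SL) x' where "x' \<in> peaks a b w" "y \<in> peaks a b w" "\<rho> y = Suc (\<rho> x')"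
      | (SS) x' y' where "x = Suc x'" "y = Suc y'" "x' \<in> peaks a b w" "y' \<in> peaks a b w" "\<rho> x' = \<rho> y'"
      unfolding A_def using f by auto
    then show "x = y"
    proof cases
      case LS
      then show ?thesis using f(3) peaks_Suc_notin by metis
    next
      case SL
      then show ?thesis using f(3) peaks_Suc_notin by metis
    qed (use \<rho>(2) in \<open>auto dest: inj_onD\<close>)
  qed
  moreover have "A \<subseteq> {a..<b}" "f ` A \<subseteq> {a..<b}"
    using f by (auto simp: A_def peaks_def) (metis Suc_lessD le_SucI)+
  ultimately obtain \<tau> where "\<tau> permutes {a..<b}" "\<forall>x\<in>A. \<tau> x = f x"
    using inj_on_extend_to_permutes[of "{a..<b}" A f] by blast
  then show thesis using that f by (simp add: A_def)
qed

lemma covers_peaks_vimage: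
  assumes "\<forall>i\<in>peaks a b w. \<tau> i \<in> peaks a b w' \<and> \<tau> (Suc i) = Suc (\<tau> i)"
    and "covers_peaks a b w' S"
  shows "covers_peaks a b w (\<tau> -` S)"
  using assms unfolding covers_peaks_def by fastforce

definition permute_profile :: "(nat \<Rightarrow> nat) \<Rightarrow> nat \<Rightarrow> nat \<Rightarrow> nat \<times> (nat \<Rightarrow> nat) \<Rightarrow> nat \<times> (nat \<Rightarrow> nat)" where
  "permute_profile \<tau> a b x = (fst x, restrict (snd x \<circ> \<tau>) {a..<b})"

lemma permute_profile_bij:
  assumes \<tau>: "\<tau> permutes {a..<b}"
  shows "bij_betw (permute_profile \<tau> a b) (profiles a b m H) (profiles a b m H)"
proof -
  have sum_perm: "sum (d \<circ> \<tau>) {a..<b} = sum d {a..<b}" for d :: "nat \<Rightarrow> nat"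
    by (rule sum.permute[OF \<tau>, symmetric])
  have image: "permute_profile \<tau> a b ` profiles a b m H \<subseteq> profiles a b m H"
    by (auto simp: profiles_def permute_profile_def sum_perm simp del: comp_apply)
  have "inj_on (permute_profile \<tau> a b) (profiles a b m H)"
  proof (rule inj_onI)
    fix x y assume x: "x \<in> profiles a b m H" and y: "y \<in> profiles a b m H"
      and eq: "permute_profile \<tau> a b x = permute_profile \<tau> a b y"
    have "snd x j = snd y j" for j
    proof (cases "j \<in> {a..<b}")
      case True
      then have "inv \<tau> j \<in> {a..<b}" using permutes_in_image[OF permutes_inv[OF \<tau>]] by blast
      moreover have "restrict (snd x \<circ> \<tau>) {a..<b} (inv \<tau> j) = restrict (snd y \<circ> \<tau>) {a..<b} (inv \<tau> j)"
        using eq by (simp add: permute_profile_def)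
      ultimately show ?thesis by (simp add: permutes_inverses(1)[OF \<tau>])
    next
      case False
      then show ?thesis using x y by (auto simp: profiles_def PiE_def extensional_def)
    qed
    moreover have "fst x = fst y" using eq by (simp add: permute_profile_def)
    ultimately show "x = y" by (simp add: prod_eq_iff fun_eq_iff)
  qed
  with image show ?thesis by (simp add: bij_betw_def endo_inj_surj finite_profiles)
qed

lemma rises_permute_profile:
  assumes "\<tau> permutes {a..<b}"
  shows "rises a b (profile_val a (permute_profile \<tau> a b x)) = \<tau> -` rises a b (profile_val a x)"
  using permutes_in_image[OF assms]
  by (auto simp: rises_profile_val permute_profile_def simp del: atLeastLessThan_iff)

text \<open>Reindexing the increments by a permutation pairing the peaks of w with peaks of w'
  keeps the profile set and the number of rises, and can only help covering the peaks.\<close>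
lemma sum_peak_weight_antitone:
  assumes "card (peaks a b w) \<le> card (peaks a b w')"
  shows "(\<Sum>x\<in>profiles a b m H. peak_weight a b w' c (rises a b (profile_val a x))) \<le>
    (\<Sum>x\<in>profiles a b m H. peak_weight a b w c (rises a b (profile_val a x)))"
proof -
  obtain \<tau> where \<tau>: "\<tau> permutes {a..<b}"
    and pairs: "\<forall>i\<in>peaks a b w. \<tau> i \<in> peaks a b w' \<and> \<tau> (Suc i) = Suc (\<tau> i)"
    using peak_pairing[OF assms] by blast
  let ?\<psi> = "permute_profile \<tau> a b" and ?R = "\<lambda>x. rises a b (profile_val a x)"
  have "peak_weight a b w' c (?R x) \<le> peak_weight a b w c (?R (?\<psi> x))" for x
  proof -
    have "card (\<tau> -` ?R x) = card (?R x)"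
      using permutes_inj[OF \<tau>] permutes_surj[OF \<tau>] by (intro card_vimage_inj) auto
    then show ?thesis
      using covers_peaks_vimage[OF pairs]
      by (simp add: peak_weight_def rises_permute_profile[OF \<tau>])
  qed
  then have "(\<Sum>x\<in>profiles a b m H. peak_weight a b w' c (?R x)) \<le>
      (\<Sum>x\<in>profiles a b m H. peak_weight a b w c (?R (?\<psi> x)))"
    by (rule sum_mono)
  also have "\<dots> = (\<Sum>x\<in>profiles a b m H. peak_weight a b w c (?R x))"
    using sum.reindex_bij_betw[OF permute_profile_bij[OF \<tau>]] by simp
  finally show ?thesis .
qed

section \<open>Shelf-shuffling counts and permutation statistics\<close>

lemma enriched_step_pos:
  "0 < x \<Longrightarrow> 0 < y \<Longrightarrow> enriched_step d x y \<longleftrightarrow> (if d then x < y else x \<le> y)"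
  by (auto simp: enriched_step_iff)

lemma wparts_pos_antimono:
  assumes "V \<subseteq> {0<..}" "\<forall>i\<in>{a..<b}. w' i \<longrightarrow> w i"
  shows "wparts a b w V \<subseteq> wparts a b w' V"
proof
  fix g assume g: "g \<in> wparts a b w V"
  have "enriched_step (w' i) (g i) (g (Suc i))" if i: "i \<in> {a..<b}" for i
  proof -
    have "g i \<in> V" "g (Suc i) \<in> V" using g i by (auto simp: wparts_def PiE_def Pi_def)
    then have "0 < g i" "0 < g (Suc i)" using assms(1) by auto
    moreover have "enriched_step (w i) (g i) (g (Suc i))" using g i by (simp add: wparts_def)
    ultimately show ?thesis using i assms(2) by (auto simp: enriched_step_pos split: if_splits)
  qed
  then show "g \<in> wparts a b w' V" using g by (auto simp: wparts_def)
qed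

lemma Omega_plus_antimono_descents:
  assumes "p permutes {1..n}" "q permutes {1..n}"
    and "\<forall>i\<in>{1..<n}. descent_word p i \<longrightarrow> descent_word q i"
  shows "Omega_plus n m q \<le> Omega_plus n m p"
  unfolding Omega_plus_def card_ppart_eq_card_wparts[OF assms(1)] card_ppart_eq_card_wparts[OF assms(2)]
  by (intro card_mono finite_wparts wparts_pos_antimono assms(3)) auto

lemma Omega_star_eq_card_wparts_abs:
  assumes "p permutes {1..n}" "1 \<le> n"
  shows "Omega_star n m p = card (wparts_abs 1 n (descent_word p) m {1..m})"
proof -
  have "wparts 1 n w ({- int m..int m} - {0}) = wparts_abs 1 n w m {1..m}" for w
  proof (intro equalityI subsetI)
    fix g assume g: "g \<in> wparts 1 n w ({- int m..int m} - {0})"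
    then have "g 1 \<in> {- int m..int m} - {0}" using assms(2) by (auto simp: wparts_def PiE_def Pi_def)
    then have "nat \<bar>g 1\<bar> \<in> {1..m}" by auto
    then show "g \<in> wparts_abs 1 n w m {1..m}" using g by (auto simp: wparts_abs_def wparts_def)
  next
    fix g assume "g \<in> wparts_abs 1 n w m {1..m}"
    then have gW: "g \<in> wparts 1 n w {- int m..int m}" and g1: "1 \<le> \<bar>g 1\<bar>"
      by (auto simp: wparts_abs_def)
    have "g i \<noteq> 0" if "i \<in> {1..n}" for i
      using wparts_abs_mono[OF gW, of 1 i] that g1 by auto
    then show "g \<in> wparts 1 n w ({- int m..int m} - {0})"
      using gW by (auto simp: wparts_def PiE_def Pi_def)
  qed
  then show ?thesis unfolding Omega_star_def card_ppart_eq_card_wparts[OF assms(1)] by simp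
qed

text \<open>The convention \<pi>(0) = 0 for left peaks becomes an extra position 0 carrying the value 0,
  followed by an ascent; this imposes no condition since prec_plus 0 y holds for every y.\<close>
definition left_descent_word :: "(nat \<Rightarrow> nat) \<Rightarrow> nat \<Rightarrow> bool" where
  "left_descent_word p i \<longleftrightarrow> i \<noteq> 0 \<and> descent_word p i"

lemma bij_betw_wparts_prepend_zero:
  assumes "\<not> w' 0" "\<forall>i\<in>{1..<n}. w' i = w i"
  shows "bij_betw (\<lambda>g. g(0 := 0)) (wparts 1 n w {- int m..int m}) (wparts_abs 0 n w' m {0})"
proof (rule bij_betw_byWitness[where f' = "\<lambda>g. g(0 := undefined)"])
  show "\<forall>g\<in>wparts 1 n w {- int m..int m}. (g(0 := 0))(0 := undefined) = g"
    by (auto simp: wparts_def PiE_def extensional_def fun_eq_iff)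
  show "\<forall>g\<in>wparts_abs 0 n w' m {0}. (g(0 := undefined))(0 := 0) = g"
    by (auto simp: wparts_abs_def fun_eq_iff)
  show "(\<lambda>g. g(0 := 0)) ` wparts 1 n w {- int m..int m} \<subseteq> wparts_abs 0 n w' m {0}"
  proof (rule image_subsetI)
    fix g assume g: "g \<in> wparts 1 n w {- int m..int m}"
    have "enriched_step (w' i) ((g(0 := 0)) i) ((g(0 := 0)) (Suc i))" if "i \<in> {0..<n}" for i
    proof (cases "i = 0")
      case True
      then show ?thesis using assms(1) by (simp add: enriched_step_iff)
    next
      case False
      then show ?thesis using g that assms(2) by (simp add: wparts_def)
    qed
    then show "g(0 := 0) \<in> wparts_abs 0 n w' m {0}"
      using g by (auto simp: wparts_abs_def wparts_def PiE_def Pi_def extensional_def)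
  qed
  show "(\<lambda>g. g(0 := undefined)) ` wparts_abs 0 n w' m {0} \<subseteq> wparts 1 n w {- int m..int m}"
  proof (rule image_subsetI)
    fix g assume g: "g \<in> wparts_abs 0 n w' m {0}"
    have "enriched_step (w i) (g i) (g (Suc i))" if "i \<in> {1..<n}" for i
    proof -
      have "enriched_step (w' i) (g i) (g (Suc i))" using g that by (simp add: wparts_abs_def wparts_def)
      then show ?thesis using that assms(2) by simp
    qed
    then show "g(0 := undefined) \<in> wparts 1 n w {- int m..int m}"
      using g by (auto simp: wparts_abs_def wparts_def PiE_def Pi_def extensional_def)
  qed
qed

lemma Omega_eq_card_wparts_abs:
  assumes "p permutes {1..n}"
  shows "Omega n m p = card (wparts_abs 0 n (left_descent_word p) m {0})"
  unfolding Omega_def card_ppart_eq_card_wparts[OF assms]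
  by (rule bij_betw_same_card, rule bij_betw_wparts_prepend_zero) (simp_all add: left_descent_word_def)

lemma pk_eq_card_peaks:
  assumes "p permutes {1..n}"
  shows "pk n p = card (peaks 1 n (descent_word p))"
proof -
  have "{i \<in> {2..n-1}. p (i-1) < p i \<and> p i > p (Suc i)} = Suc ` peaks 1 n (descent_word p)"
  proof (intro equalityI subsetI)
    fix i assume "i \<in> {i \<in> {2..n-1}. p (i-1) < p i \<and> p i > p (Suc i)}"
    then have "i - 1 \<in> peaks 1 n (descent_word p)" "i = Suc (i - 1)"
      by (auto simp: peaks_def descent_word_def)
    then show "i \<in> Suc ` peaks 1 n (descent_word p)" by (metis imageI)
  next
    fix i assume "i \<in> Suc ` peaks 1 n (descent_word p)"
    then obtain j where "i = Suc j" "j \<in> peaks 1 n (descent_word p)" by auto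
    then show "i \<in> {i \<in> {2..n-1}. p (i-1) < p i \<and> p i > p (Suc i)}"
      using permutes_Suc_neq[OF assms, of j] by (auto simp: peaks_def descent_word_def)
  qed
  then show ?thesis unfolding pk_def by (simp add: card_image)
qed

lemma lpk_eq_card_peaks:
  assumes "p permutes {1..n}"
  shows "lpk n p = card (peaks 0 n (left_descent_word p))"
proof -
  have "{i \<in> {1..n-1}. (if i = 1 then 0 else p (i-1)) < p i \<and> p i > p (Suc i)} =
      Suc ` peaks 0 n (left_descent_word p)"
  proof (intro equalityI subsetI)
    fix i assume "i \<in> {i \<in> {1..n-1}. (if i = 1 then 0 else p (i-1)) < p i \<and> p i > p (Suc i)}"
    then have "i - 1 \<in> peaks 0 n (left_descent_word p)" "i = Suc (i - 1)"
      by (auto simp: peaks_def left_descent_word_def descent_word_def split: if_splits)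
    then show "i \<in> Suc ` peaks 0 n (left_descent_word p)" by (metis imageI)
  next
    fix i assume "i \<in> Suc ` peaks 0 n (left_descent_word p)"
    then obtain j where j: "i = Suc j" "j \<in> peaks 0 n (left_descent_word p)" by auto
    have "1 \<le> p 1" using permutes_in_image[OF assms, of 1] j by (auto simp: peaks_def)
    then show "i \<in> {i \<in> {1..n-1}. (if i = 1 then 0 else p (i-1)) < p i \<and> p i > p (Suc i)}"
      using j permutes_Suc_neq[OF assms, of j]
      by (auto simp: peaks_def left_descent_word_def descent_word_def)
  qed
  then show ?thesis unfolding lpk_def by (simp add: card_image)
qed

lemma lpk_le: "p permutes {1..n} \<Longrightarrow> lpk n p \<le> n div 2"
  using card_peaks_le[of 0 n "left_descent_word p"] by (simp add: lpk_eq_card_peaks)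

lemma pk_le: "p permutes {1..n} \<Longrightarrow> pk n p \<le> (n - 1) div 2"
  using card_peaks_le[of 1 n "descent_word p"] by (simp add: pk_eq_card_peaks)

lemma Omega_antitone_lpk:
  assumes "p permutes {1..n}" "q permutes {1..n}" "lpk n p \<le> lpk n q"
  shows "Omega n m q \<le> Omega n m p"
proof -
  have no_descent_at_0: "\<not> left_descent_word v 0" for v by (simp add: left_descent_word_def)
  show ?thesis
    unfolding Omega_eq_card_wparts_abs[OF assms(1)] Omega_eq_card_wparts_abs[OF assms(2)]
      card_wparts_abs_lazy[where w = "left_descent_word p", OF le0 no_descent_at_0]
      card_wparts_abs_lazy[where w = "left_descent_word q", OF le0 no_descent_at_0]
    by (rule sum_peak_weight_antitone) (use assms in \<open>simp add: lpk_eq_card_peaks\<close>)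
qed

lemma Omega_star_antitone_pk:
  assumes "p permutes {1..n}" "q permutes {1..n}" "1 \<le> n" "pk n p \<le> pk n q"
  shows "Omega_star n m q \<le> Omega_star n m p"
  unfolding Omega_star_eq_card_wparts_abs[OF assms(1,3)] Omega_star_eq_card_wparts_abs[OF assms(2,3)]
    card_wparts_abs_std[OF assms(3)]
  by (rule sum_peak_weight_antitone) (use assms in \<open>simp add: pk_eq_card_peaks\<close>)

section \<open>Extremal permutations\<close>

lemma involution_permutes:
  assumes "\<And>x. x \<notin> S \<Longrightarrow> f x = x" "\<And>x. f (f x) = x"
  shows "f permutes S"
  unfolding permutes_def using assms by metis

definition reversal :: "nat \<Rightarrow> nat \<Rightarrow> nat" where
  "reversal n i = (if 1 \<le> i \<and> i \<le> n then Suc n - i else i)"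

definition pair_swaps :: "nat \<Rightarrow> nat \<Rightarrow> nat \<Rightarrow> nat" where
  "pair_swaps s n i =
    (if s \<le> i \<and> i \<le> n then (if even (i - s) then (if i < n then Suc i else i) else i - 1) else i)"

lemma reversal_permutes: "reversal n permutes {1..n}"
  by (rule involution_permutes) (auto simp: reversal_def)

lemma pair_swaps_involution:
  assumes "1 \<le> s" shows "pair_swaps s n (pair_swaps s n x) = x"
proof (cases "s \<le> x \<and> x \<le> n")
  case x: True
  show ?thesis
  proof (cases "even (x - s)")
    case ev: True
    show ?thesis
    proof (cases "x < n")
      case True
      have "\<not> even (Suc x - s)" using ev x by (simp add: Suc_diff_le)
      then show ?thesis using True ev x by (simp add: pair_swaps_def)
    next
      case False then show ?thesis using ev x by (simp add: pair_swaps_def)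
    qed
  next
    case od: False
    then have xs: "s < x" using x by (cases "x = s") auto
    have "even (x - 1 - s)" using od xs
      by (metis Suc_diff_Suc diff_Suc_1 diff_commute even_Suc le_add_diff_inverse2 less_imp_le_nat
          Nat.add_diff_assoc2)
    moreover have "s \<le> x - 1" "x - 1 < n" "Suc (x - 1) = x" using xs x by auto
    ultimately show ?thesis using od xs x by (simp add: pair_swaps_def)
  qed
next
  case False
  then have "pair_swaps s n x = x" unfolding pair_swaps_def by (rule if_not_P)
  then show ?thesis by simp
qed

lemma pair_swaps_permutes: "1 \<le> s \<Longrightarrow> pair_swaps s n permutes {1..n}"
  by (rule involution_permutes[OF _ pair_swaps_involution]) (auto simp: pair_swaps_def)

lemma descent_word_pair_swaps:
  assumes "s = 1 \<or> s = 2" "1 \<le> i" "i < n"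
  shows "descent_word (pair_swaps s n) i \<longleftrightarrow> s \<le> i \<and> even (i - s)"
proof (cases "s \<le> i")
  case False
  then have "i = 1" "s = 2" using assms by auto
  then show ?thesis using assms by (auto simp: descent_word_def pair_swaps_def)
next
  case si: True
  show ?thesis
  proof (cases "even (i - s)")
    case True
    have "\<not> even (Suc i - s)" using True si by (simp add: Suc_diff_le)
    then show ?thesis using True si assms by (simp add: descent_word_def pair_swaps_def)
  next
    case False
    have "even (Suc i - s)" using False si by (simp add: Suc_diff_le)
    then show ?thesis using False si assms by (auto simp: descent_word_def pair_swaps_def)
  qed
qed

lemma card_even_below: "card {j. j < N \<and> even j} = (N + 1) div 2"
proof (induction N)
  case (Suc N)
  have "{j. j < Suc N \<and> even j} =
      (if even N then insert N {j. j < N \<and> even j} else {j. j < N \<and> even j})"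
    by (auto simp: less_Suc_eq)
  then show ?case using Suc by auto
qed simp

lemma card_odd_below: "card {j. j < N \<and> odd j} = N div 2"
proof (induction N)
  case (Suc N)
  have "{j. j < Suc N \<and> odd j} =
      (if odd N then insert N {j. j < N \<and> odd j} else {j. j < N \<and> odd j})"
    by (auto simp: less_Suc_eq)
  then show ?case using Suc by auto
qed simp

lemma lpk_pair_swaps:
  assumes "1 \<le> n" shows "lpk n (pair_swaps 1 n) = n div 2"
proof -
  have "peaks 0 n (left_descent_word (pair_swaps 1 n)) = {j. j < n - 1 \<and> even j}"
  proof (rule set_eqI)
    fix j
    show "j \<in> peaks 0 n (left_descent_word (pair_swaps 1 n)) \<longleftrightarrow> j \<in> {j. j < n - 1 \<and> even j}"
    proof (cases "Suc j < n")
      case True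
      have "descent_word (pair_swaps 1 n) (Suc j) \<longleftrightarrow> even j"
        using descent_word_pair_swaps[of 1 "Suc j" n] True by simp
      moreover have "left_descent_word (pair_swaps 1 n) j \<longleftrightarrow> odd j"
        using descent_word_pair_swaps[of 1 j n] True by (cases j) (auto simp: left_descent_word_def)
      ultimately show ?thesis using True by (auto simp: peaks_def left_descent_word_def)
    qed (auto simp: peaks_def)
  qed
  then show ?thesis
    using lpk_eq_card_peaks[OF pair_swaps_permutes[of 1 n]] card_even_below[of "n - 1"] assms by simp
qed

lemma pk_pair_swaps: "pk n (pair_swaps 2 n) = (n - 1) div 2"
proof -
  have "peaks 1 n (descent_word (pair_swaps 2 n)) = {j. j < n - 1 \<and> odd j}"
  proof (rule set_eqI)
    fix j
    show "j \<in> peaks 1 n (descent_word (pair_swaps 2 n)) \<longleftrightarrow> j \<in> {j. j < n - 1 \<and> odd j}"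
    proof (cases "Suc j < n \<and> 1 \<le> j")
      case True
      have "descent_word (pair_swaps 2 n) (Suc j) \<longleftrightarrow> odd j"
        using descent_word_pair_swaps[of 2 "Suc j" n] True by (cases j) auto
      moreover have "descent_word (pair_swaps 2 n) j \<longleftrightarrow> 2 \<le> j \<and> even j"
        using descent_word_pair_swaps[of 2 j n] True by (cases "2 \<le> j") (auto simp: even_diff_nat)
      ultimately show ?thesis using True by (auto simp: peaks_def)
    qed (cases j; auto simp: peaks_def)
  qed
  then show ?thesis using pk_eq_card_peaks[OF pair_swaps_permutes[of 2 n]] card_odd_below[of "n - 1"] by simp
qed

lemma des_reversal: "des n (reversal n) = n - 1"
proof -
  have "{i \<in> {1..<n}. reversal n i > reversal n (Suc i)} = {1..<n}" by (auto simp: reversal_def)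
  then show ?thesis unfolding des_def by simp
qed

lemma stats_id: "lpk n id = 0" "pk n id = 0" "des n id = 0"
  unfolding lpk_def pk_def des_def by auto

section \<open>Separation and sup-distance\<close>

lemma Max_image_eq_max_extremes:
  fixes P :: "'a \<Rightarrow> real" and \<phi> :: "real \<Rightarrow> real"
  assumes "finite S" "A \<in> S" "B \<in> S" "\<And>s. s \<in> S \<Longrightarrow> P B \<le> P s \<and> P s \<le> P A"
    and "\<And>t. P B \<le> t \<Longrightarrow> t \<le> P A \<Longrightarrow> \<phi> t \<le> max (\<phi> (P A)) (\<phi> (P B))"
  shows "Max ((\<lambda>s. \<phi> (P s)) ` S) = max (\<phi> (P A)) (\<phi> (P B))"
proof (rule Max_eqI)
  show "max (\<phi> (P A)) (\<phi> (P B)) \<in> (\<lambda>s. \<phi> (P s)) ` S"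
    using assms(2,3) by (simp add: max_def)
qed (use assms in auto)

lemma sep_linf_extremal_intro:
  assumes "p0 permutes {1..n}" "st n p0 = 0" "p1 permutes {1..n}" "st n p1 = k"
    and le_at_0: "\<And>p q. p permutes {1..n} \<Longrightarrow> q permutes {1..n} \<Longrightarrow> st n q = 0 \<Longrightarrow> P p \<le> P q"
    and ge_at_k: "\<And>p q. p permutes {1..n} \<Longrightarrow> q permutes {1..n} \<Longrightarrow> st n q = k \<Longrightarrow> P q \<le> P p"
  shows "sep_linf_extremal n P st k"
proof -
  define A where "A = (SOME p. p permutes {1..n} \<and> st n p = 0)"
  define B where "B = (SOME p. p permutes {1..n} \<and> st n p = k)"
  have A: "A permutes {1..n}" "st n A = 0"
    using someI[of "\<lambda>p. p permutes {1..n} \<and> st n p = 0"] assms(1,2) unfolding A_def by blast+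
  have B: "B permutes {1..n}" "st n B = k"
    using someI[of "\<lambda>p. p permutes {1..n} \<and> st n p = k"] assms(3,4) unfolding B_def by blast+
  let ?S = "{p. p permutes {1..n}}"
  have S: "finite ?S" "A \<in> ?S" "B \<in> ?S" using finite_permutations A B by auto
  have bounds: "fact n * P B \<le> fact n * P p \<and> fact n * P p \<le> fact n * P A" if "p \<in> ?S" for p
    using le_at_0[OF _ A] ge_at_k[OF _ B] that by (simp add: mult_left_mono)
  have "sep n P = max (1 - fact n * P A) (1 - fact n * P B)"
    unfolding sep_def
    by (rule Max_image_eq_max_extremes[OF S, where \<phi> = "\<lambda>t. 1 - t" and P = "\<lambda>p. fact n * P p"])
      (use bounds in auto)
  moreover have "linf_dist n P = max \<bar>1 - fact n * P A\<bar> \<bar>1 - fact n * P B\<bar>"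
    unfolding linf_dist_def
    by (rule Max_image_eq_max_extremes[OF S, where \<phi> = "\<lambda>t. \<bar>1 - t\<bar>" and P = "\<lambda>p. fact n * P p"])
      (use bounds in auto)
  ultimately show ?thesis unfolding sep_linf_extremal_def Pk_def A_def B_def by simp
qed

lemma x_lazy_antitone_lpk:
  "p permutes {1..n} \<Longrightarrow> q permutes {1..n} \<Longrightarrow> lpk n p \<le> lpk n q \<Longrightarrow> x_lazy n m q \<le> x_lazy n m p"
  unfolding x_lazy_def by (intro divide_right_mono) (simp_all add: Omega_antitone_lpk)

lemma x_std_antitone_pk:
  "p permutes {1..n} \<Longrightarrow> q permutes {1..n} \<Longrightarrow> 1 \<le> n \<Longrightarrow> pk n p \<le> pk n q \<Longrightarrow>
    x_std n m q \<le> x_std n m p"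
  unfolding x_std_def by (intro divide_right_mono) (simp_all add: Omega_star_antitone_pk)

lemma x_strict_antimono_descents:
  "p permutes {1..n} \<Longrightarrow> q permutes {1..n} \<Longrightarrow>
    \<forall>i\<in>{1..<n}. descent_word p i \<longrightarrow> descent_word q i \<Longrightarrow> x_strict n m q \<le> x_strict n m p"
  unfolding x_strict_def by (intro divide_right_mono) (simp_all add: Omega_plus_antimono_descents)

lemma sep_linf_extremal_lazy:
  assumes "1 \<le> n"
  shows "sep_linf_extremal n (x_lazy n m) lpk (n div 2)"
proof (rule sep_linf_extremal_intro)
  show "id permutes {1..n}" "lpk n id = 0" by (rule permutes_id, rule stats_id)
  show "pair_swaps 1 n permutes {1..n}" by (rule pair_swaps_permutes) simp
  show "lpk n (pair_swaps 1 n) = n div 2" by (rule lpk_pair_swaps[OF assms])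
  show "x_lazy n m p \<le> x_lazy n m q" if "p permutes {1..n}" "q permutes {1..n}" "lpk n q = 0" for p q
    by (rule x_lazy_antitone_lpk) (use that in simp_all)
  show "x_lazy n m q \<le> x_lazy n m p"
    if "p permutes {1..n}" "q permutes {1..n}" "lpk n q = n div 2" for p q
    by (rule x_lazy_antitone_lpk) (use that lpk_le in simp_all)
qed

lemma sep_linf_extremal_std:
  assumes "1 \<le> n"
  shows "sep_linf_extremal n (x_std n m) pk ((n - 1) div 2)"
proof (rule sep_linf_extremal_intro)
  show "id permutes {1..n}" "pk n id = 0" by (rule permutes_id, rule stats_id)
  show "pair_swaps 2 n permutes {1..n}" by (rule pair_swaps_permutes) simp
  show "pk n (pair_swaps 2 n) = (n - 1) div 2" by (rule pk_pair_swaps)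
  show "x_std n m p \<le> x_std n m q" if "p permutes {1..n}" "q permutes {1..n}" "pk n q = 0" for p q
    by (rule x_std_antitone_pk) (use that assms in simp_all)
  show "x_std n m q \<le> x_std n m p"
    if "p permutes {1..n}" "q permutes {1..n}" "pk n q = (n - 1) div 2" for p q
    by (rule x_std_antitone_pk) (use that assms pk_le in simp_all)
qed

lemma sep_linf_extremal_strict: "sep_linf_extremal n (x_strict n m) des (n - 1)"
proof (rule sep_linf_extremal_intro)
  show "id permutes {1..n}" "des n id = 0" by (rule permutes_id, rule stats_id)
  show "reversal n permutes {1..n}" "des n (reversal n) = n - 1"
    by (rule reversal_permutes, rule des_reversal)
  show "x_strict n m p \<le> x_strict n m q" if "p permutes {1..n}" "q permutes {1..n}" "des n q = 0" for p q
    by (rule x_strict_antimono_descents) (use that in \<open>auto simp: des_def descent_word_def\<close>)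
  show "x_strict n m q \<le> x_strict n m p"
    if "p permutes {1..n}" "q permutes {1..n}" "des n q = n - 1" for p q
  proof (rule x_strict_antimono_descents[OF that(1,2)])
    have "{i \<in> {1..<n}. descent_word q i} = {1..<n}"
      using that(3) by (intro card_subset_eq) (auto simp: des_def descent_word_def)
    then show "\<forall>i\<in>{1..<n}. descent_word p i \<longrightarrow> descent_word q i" by blast
  qed
qed

theorem mainTheorem7:
  fixes n m :: nat
  assumes "n \<ge> 1" and "m \<ge> 1"
  shows "sep_linf_extremal n (x_lazy n m) lpk (n div 2) \<and>
         sep_linf_extremal n (x_std n m) pk ((n - 1) div 2) \<and>
         sep_linf_extremal n (x_strict n m) des (n - 1)"
  using sep_linf_extremal_lazy[OF assms(1)] sep_linf_extremal_std[OF assms(1)] sep_linf_extremal_strict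
  by blast

end
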